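(* Let $p\ge5$ and consider the white metallic tree $\mathcal W_\pi$ under the penultimate assignment. Let $\nu$ be any node, let $u$ be its metallic code and let $w$ be the metallic code of $\nu-1$ (the empty word if $\nu=1$). Then: (i) if $\nu$ is black, the signature of $\nu$ is $0$, and its $p-3$ sons, in increasing order, have metallic codes $w\,(h+1)$ for $h=1,\dots,p-5$ (the code $w$ followed by the digit $h+1$), then $u\,0$, then $u\,1$; (ii) if $\nu$ is white, the signature of $\nu$ is nonzero, and its $p-2$ sons, in increasing order, have metallic codes $w\,(h+1)$ for $h=1,\dots,p-4$, then $u\,0$, then $u\,1$. In particular, in both cases the black son $u\,0$ has signature $0$ and the sons other than $u0,u1$ have signatures $2,3,\dots$ in increasing order.
   Context: Fix $p\ge5$. Metallic numbers: $m_{-1}=0$, $m_0=1$, $m_{n+2}=(p-2)m_{n+1}-m_n$. With $d=p-3$, $c=p-4$, the metallic code of a positive integer $n$ is the unique word $a_k\cdots a_0$ over $\{0,\dots,p-3\}$ with $a_k\ne0$, $n=\sum a_im_i$, containing no factor $d\,c^j\,d$ ($j\ge0$); the code of $0$ is the empty word; the signature of $n$ is its last digit $a_0$; $w\,e$ denotes the word $w$ followed by the digit $e$. White metallic tree under an assignment $\alpha$, $\mathcal W_\alpha$: its nodes are the positive integers, each black or white; the root $1$ is white; nodes are processed in increasing order, and node $\nu$ receives $p-2$ sons if white and $p-3$ sons if black, these sons being the smallest integers not yet used, in increasing order; the assignment specifies for each node the position (among its sons, the leftmost having position $1$) of its unique black son, all other sons being white. The penultimate assignment $\pi$ puts the black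 son at the penultimate position (position $p-3$ for a white node, $p-4$ for a black node). *)

theory Defs
  imports Main
begin

(* Metallic numbers m_n for n >= 0 (m_{-1} = 0 is folded into m_1 = p - 2). *)
fun metallic :: "nat \<Rightarrow> nat \<Rightarrow> int" where
  "metallic p 0 = 1"
| "metallic p (Suc 0) = int p - 2"
| "metallic p (Suc (Suc n)) = (int p - 2) * metallic p (Suc n) - metallic p n"

(* A word a_k ... a_0 is the list [a_k, ..., a_0]; its last element is a_0. *)
definition word_val :: "nat \<Rightarrow> nat list \<Rightarrow> int" where
  "word_val p xs = (\<Sum>i<length xs. int (rev xs ! i) * metallic p i)"

definition is_metallic_code :: "nat \<Rightarrow> nat \<Rightarrow> nat list \<Rightarrow> bool" where
  "is_metallic_code p n xs \<longleftrightarrow>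
     set xs \<subseteq> {0..p-3} \<and> (xs = [] \<or> hd xs \<noteq> 0) \<and> word_val p xs = int n \<and>
     \<not> (\<exists>a b j. xs = a @ [p-3] @ replicate j (p-4) @ [p-3] @ b)"

definition metallic_code :: "nat \<Rightarrow> nat \<Rightarrow> nat list" where
  "metallic_code p n = (THE xs. is_metallic_code p n xs)"

definition signature :: "nat \<Rightarrow> nat \<Rightarrow> nat" where
  "signature p n = last (metallic_code p n)"

(* Assignment: node \<Rightarrow> (node is white) \<Rightarrow> position (1-based) of its black son. *)
type_synonym assignment = "nat \<Rightarrow> bool \<Rightarrow> nat"

(* tree_colors p \<alpha> k: colours (True = white) of nodes 1, 2, ..., listed in order,
   after nodes 1..k have been processed; list index i corresponds to node i+1. *)
fun tree_colors :: "nat \<Rightarrow> assignment \<Rightarrow> nat \<Rightarrow> bool list" where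
  "tree_colors p \<alpha> 0 = [True]"
| "tree_colors p \<alpha> (Suc k) =
     (let L = tree_colors p \<alpha> k; wh = L ! k;
          ns = (if wh then p - 2 else p - 3); pos = \<alpha> (Suc k) wh
      in L @ map (\<lambda>i. i \<noteq> pos) [1..<ns+1])"

definition is_white :: "nat \<Rightarrow> assignment \<Rightarrow> nat \<Rightarrow> bool" where
  "is_white p \<alpha> \<nu> = tree_colors p \<alpha> \<nu> ! (\<nu> - 1)"

definition sons :: "nat \<Rightarrow> assignment \<Rightarrow> nat \<Rightarrow> nat list" where
  "sons p \<alpha> \<nu> = [length (tree_colors p \<alpha> (\<nu> - 1)) + 1 ..< length (tree_colors p \<alpha> \<nu>) + 1]"

definition penultimate :: "nat \<Rightarrow> assignment" where
  "penultimate p = (\<lambda>\<nu> wh. if wh then p - 3 else p - 4)"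

end

theory Submission
  imports Defs
begin

(* Write d = p - 3, c = p - 4 and val for the value of a word. An admissible word of length k
   (digits at most d, no factor d c^j d) has value below m_k, and even below m_k - m_(k-1) unless it
   starts with c^j d; hence metallic codes are unique. If u is the code of n >= 1 and w that of
   n - 1, then val (u 0) - val (w 0) is p - 2 when the last digit of u is nonzero and p - 3
   otherwise (decrement the last digit, or turn b 0^(j+1) into (b-1) d c^j), and in the first case
   w d is still admissible. So, inductively along the tree, the sons of node n are the integers
   val (w 0) + 2, ..., val (u 0) + 1, whose codes are w 2, w 3, ..., u 0, u 1. This produces the
   codes of all integers at the same time, and shows that a node is black exactly when its
   signature is 0, which is the colouring prescribed by the penultimate assignment. *)

section \<open>Metallic numbers and values of words\<close>

definition metallic_prev :: "nat \<Rightarrow> nat \<Rightarrow> int" where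
  "metallic_prev p k = (if k = 0 then 0 else metallic p (k - 1))"

lemma metallic_Suc: "metallic p (Suc k) = (int p - 2) * metallic p k - metallic_prev p k"
  by (cases k) (simp_all add: metallic_prev_def)

fun digits_val :: "nat \<Rightarrow> nat \<Rightarrow> nat list \<Rightarrow> int" where
  "digits_val p k [] = 0"
| "digits_val p k (a # ds) = int a * metallic p k + digits_val p (Suc k) ds"

lemma digits_val_conv_sum: "digits_val p k ds = (\<Sum>i<length ds. int (ds ! i) * metallic p (i + k))"
proof (induction ds arbitrary: k)
  case (Cons a ds)
  show ?case by (simp only: length_Cons sum.lessThan_Suc_shift) (simp add: Cons.IH)
qed simp

lemma word_val_eq_digits_val: "word_val p xs = digits_val p 0 (rev xs)"
  by (simp add: word_val_def digits_val_conv_sum)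

lemma digits_val_append: "digits_val p k (ds @ es) = digits_val p k ds + digits_val p (k + length ds) es"
  by (induction ds arbitrary: k) simp_all

lemma digits_val_replicate_0 [simp]: "digits_val p k (replicate j 0) = 0"
  by (induction j arbitrary: k) simp_all

lemma word_val_Cons: "word_val p (a # xs) = int a * metallic p (length xs) + word_val p xs"
  by (simp add: word_val_eq_digits_val digits_val_append)

lemma word_val_snoc: "word_val p (xs @ [a]) = int a + word_val p (xs @ [0])"
  by (simp add: word_val_eq_digits_val)

lemma takeWhile_eq_replicate_0: "takeWhile (\<lambda>x. x = 0) xs = replicate (length (takeWhile (\<lambda>x. x = 0) xs)) (0::nat)"
  by (metis (mono_tags) replicate_length_same set_takeWhileD)

lemma word_val_replicate_0_append [simp]: "word_val p (replicate k 0 @ xs) = word_val p xs"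
  by (simp add: word_val_eq_digits_val digits_val_append)

lemma word_val_dropWhile_0_append:
  "word_val p (dropWhile (\<lambda>x. x = 0) xs @ ys) = word_val p (xs @ ys)"
  by (metis append_assoc takeWhile_dropWhile_id takeWhile_eq_replicate_0 word_val_replicate_0_append)

section \<open>Admissible words\<close>

definition dcd_free :: "nat \<Rightarrow> nat list \<Rightarrow> bool" where
  "dcd_free p xs \<longleftrightarrow> \<not> (\<exists>a b j. xs = a @ [p-3] @ replicate j (p-4) @ [p-3] @ b)"

definition admissible :: "nat \<Rightarrow> nat list \<Rightarrow> bool" where
  "admissible p xs \<longleftrightarrow> set xs \<subseteq> {0..p-3} \<and> dcd_free p xs"

definition starts_cd :: "nat \<Rightarrow> nat list \<Rightarrow> bool" where
  "starts_cd p xs \<longleftrightarrow> (\<exists>j ys. xs = replicate j (p-4) @ (p-3) # ys)"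

definition ends_dc :: "nat \<Rightarrow> nat list \<Rightarrow> bool" where
  "ends_dc p xs \<longleftrightarrow> (\<exists>ys j. xs = ys @ [p-3] @ replicate j (p-4))"

lemma dcd_free_Nil [simp]: "dcd_free p []"
  by (simp add: dcd_free_def)

lemma dcd_free_appendD1: "dcd_free p (xs @ ys) \<Longrightarrow> dcd_free p xs"
  unfolding dcd_free_def by (metis append_assoc)

lemma dcd_free_appendD2: "dcd_free p (xs @ ys) \<Longrightarrow> dcd_free p ys"
  unfolding dcd_free_def by (metis append_assoc)

lemma admissible_ConsD: "admissible p (a # xs) \<Longrightarrow> admissible p xs"
  unfolding admissible_def using dcd_free_appendD2[of p "[a]" xs] by simp

lemma dcd_free_Cons_d: "dcd_free p ((p-3) # xs) \<Longrightarrow> \<not> starts_cd p xs"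
  unfolding dcd_free_def starts_cd_def by (metis append_Cons append_Nil)

lemma starts_cd_Cons_c: "starts_cd p xs \<Longrightarrow> starts_cd p ((p-4) # xs)"
  unfolding starts_cd_def by (metis append_Cons replicate_Suc)

lemma dcd_free_snoc:
  "dcd_free p (xs @ [e]) \<longleftrightarrow> dcd_free p xs \<and> (e = p-3 \<longrightarrow> \<not> ends_dc p xs)"
proof
  assume free: "dcd_free p (xs @ [e])"
  moreover have "\<not> ends_dc p xs" if "e = p-3"
    using free that unfolding ends_dc_def dcd_free_def by force
  ultimately show "dcd_free p xs \<and> (e = p-3 \<longrightarrow> \<not> ends_dc p xs)"
    using dcd_free_appendD1 by blast
next
  assume free: "dcd_free p xs \<and> (e = p-3 \<longrightarrow> \<not> ends_dc p xs)"
  show "dcd_free p (xs @ [e])"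
    unfolding dcd_free_def
  proof clarify
    fix a b j assume eq: "xs @ [e] = a @ [p-3] @ replicate j (p-4) @ [p-3] @ b"
    show False
    proof (cases b rule: rev_cases)
      case Nil
      then have "xs = a @ [p-3] @ replicate j (p-4)" "e = p-3"
        using eq by simp_all
      then show False
        using free unfolding ends_dc_def by blast
    next
      case (snoc b' x)
      then have "xs = a @ [p-3] @ replicate j (p-4) @ [p-3] @ b'"
        using eq by simp
      then show False
        using free unfolding dcd_free_def by blast
    qed
  qed
qed

lemma ends_dc_snoc: "ends_dc p (xs @ [e]) \<longleftrightarrow> e = p-3 \<or> (e = p-4 \<and> ends_dc p xs)"
proof
  assume "ends_dc p (xs @ [e])"
  then obtain ys j where eq: "xs @ [e] = ys @ [p-3] @ replicate j (p-4)"
    unfolding ends_dc_def by blast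
  show "e = p-3 \<or> (e = p-4 \<and> ends_dc p xs)"
  proof (cases j)
    case (Suc i)
    then have "xs @ [e] = (ys @ [p-3] @ replicate i (p-4)) @ [p-4]"
      using eq by (simp add: replicate_append_same[symmetric])
    then show ?thesis
      unfolding ends_dc_def by blast
  qed (use eq in simp)
next
  assume "e = p-3 \<or> (e = p-4 \<and> ends_dc p xs)"
  then show "ends_dc p (xs @ [e])"
    unfolding ends_dc_def
    by (metis append_Nil2 append_assoc replicate_0 replicate_append_same replicate_Suc)
qed

lemma dcd_free_append_replicate_c:
  assumes "4 \<le> p" and "dcd_free p xs"
  shows "dcd_free p (xs @ replicate j (p-4))"
proof (induction j)
  case (Suc j)
  have "p - 4 \<noteq> p - 3"
    using assms(1) by simp
  then show ?case
    using Suc dcd_free_snoc[of p "xs @ replicate j (p-4)" "p-4"]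
    by (simp add: replicate_append_same[symmetric])
qed (use assms(2) in simp)

lemma ends_dc_append: "ends_dc p ys \<Longrightarrow> ends_dc p (xs @ ys)"
  unfolding ends_dc_def by (metis append_assoc)

lemma ends_dc_dropWhileD: "ends_dc p (dropWhile P xs) \<Longrightarrow> ends_dc p xs"
  by (metis ends_dc_append takeWhile_dropWhile_id)

lemma split_trailing_zeros:
  "\<exists>x\<in>set xs. x \<noteq> (0::nat) \<Longrightarrow> \<exists>ys b k. b \<noteq> 0 \<and> xs = ys @ [b] @ replicate k 0"
proof (induction xs rule: rev_induct)
  case (snoc x xs)
  show ?case
  proof (cases "x = 0")
    case True
    then obtain ys b k where "b \<noteq> 0" "xs = ys @ [b] @ replicate k 0"
      using snoc by auto
    with True show ?thesis
      by (intro exI[of _ ys] exI[of _ b] exI[of _ "Suc k"]) (simp add: replicate_append_same[symmetric])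
  qed (intro exI[of _ xs] exI[of _ x] exI[of _ 0], simp)
qed simp

lemma is_metallic_code_iff:
  "is_metallic_code p n xs \<longleftrightarrow> admissible p xs \<and> (xs = [] \<or> hd xs \<noteq> 0) \<and> word_val p xs = int n"
  unfolding is_metallic_code_def admissible_def dcd_free_def by auto

lemma is_metallic_code_Nil: "is_metallic_code p 0 []"
  by (simp add: is_metallic_code_iff admissible_def word_val_def)

lemma is_metallic_code_snoc:
  assumes "is_metallic_code p n xs" and "e \<le> p - 3" and "e = p - 3 \<Longrightarrow> \<not> ends_dc p xs"
    and "xs \<noteq> [] \<or> e \<noteq> 0" and "int m = word_val p (xs @ [0]) + int e"
  shows "is_metallic_code p m (xs @ [e])"
proof -
  have "admissible p (xs @ [e])"
    using assms(1-3) by (auto simp: is_metallic_code_iff admissible_def dcd_free_snoc)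
  moreover have "hd (xs @ [e]) \<noteq> 0"
    using assms(1,4) by (cases xs) (auto simp: is_metallic_code_iff)
  ultimately show ?thesis
    using assms(5) word_val_snoc[of p xs e] by (simp add: is_metallic_code_iff)
qed

lemma is_metallic_code_dropWhile_0:
  assumes "admissible p xs" and "word_val p xs = int n"
  shows "is_metallic_code p n (dropWhile (\<lambda>x. x = 0) xs)"
proof -
  let ?ys = "dropWhile (\<lambda>x. x = 0) xs"
  have "dcd_free p ?ys"
    using assms(1) dcd_free_appendD2[of p "takeWhile (\<lambda>x. x = 0) xs"] by (simp add: admissible_def)
  moreover have "set ?ys \<subseteq> {0..p-3}"
    using assms(1) set_dropWhileD by (fastforce simp: admissible_def)
  moreover have "word_val p ?ys = int n"
    using assms(2) word_val_dropWhile_0_append[of p xs "[]"] by simp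
  moreover have "?ys = [] \<or> hd ?ys \<noteq> 0"
    using hd_dropWhile[of "\<lambda>x. x = 0" xs] by blast
  ultimately show ?thesis
    by (simp add: is_metallic_code_iff admissible_def)
qed

definition son_count :: "nat \<Rightarrow> nat list \<Rightarrow> nat" where
  "son_count p u = (if last u \<noteq> 0 then p - 2 else p - 3)"

definition son_words :: "nat \<Rightarrow> nat list \<Rightarrow> nat list \<Rightarrow> nat list list" where
  "son_words p u w = map (\<lambda>h. w @ [h + 1]) [1..<son_count p u - 1] @ [u @ [0], u @ [1]]"

lemma last_son_words_eq_0_iff: "s \<in> set (son_words p u w) \<Longrightarrow> last s = 0 \<longleftrightarrow> s = u @ [0]"
  by (auto simp: son_words_def)

(* The number of nodes once nodes 1, ..., k have received their sons (see tree_colors_penultimate).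
   Defining it through the code of k lets the existence of codes and the shape of the tree be
   proved in a single induction. *)
definition tree_size :: "nat \<Rightarrow> nat \<Rightarrow> nat" where
  "tree_size p k = nat (word_val p (metallic_code p k @ [0])) + 1"

section \<open>Uniqueness of metallic codes\<close>

context
  fixes p :: nat
  assumes p5: "5 \<le> p"
begin

lemma metallic_pos_less_Suc: "1 \<le> metallic p k \<and> metallic p k < metallic p (Suc k)"
proof (induction k)
  case (Suc k)
  have "5 * metallic p (Suc k) \<le> int p * metallic p (Suc k)"
    using p5 Suc by (intro mult_right_mono) auto
  moreover have "metallic p (Suc (Suc k)) = (int p - 2) * metallic p (Suc k) - metallic p k"
    by simp
  ultimately show ?case
    using Suc by (simp only: algebra_simps) linarith
qed (use p5 in simp)

lemma metallic_pos: "1 \<le> metallic p k"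
  using metallic_pos_less_Suc by blast

lemma metallic_mono: "i \<le> j \<Longrightarrow> metallic p i \<le> metallic p j"
  by (rule lift_Suc_mono_le[of "metallic p"]) (use metallic_pos_less_Suc less_imp_le in auto)

lemma metallic_prev_less: "metallic_prev p k < metallic p k"
  using metallic_pos_less_Suc[of "k - 1"] metallic_pos[of k] by (cases k) (auto simp: metallic_prev_def)

lemma digits_val_nonneg: "0 \<le> digits_val p k ds"
proof (induction ds arbitrary: k)
  case (Cons a ds)
  have "0 \<le> int a * metallic p k"
    using metallic_pos[of k] by simp
  then show ?case
    using Cons.IH[of "Suc k"] by simp
qed simp

lemma word_val_nonneg: "0 \<le> word_val p xs"
  by (simp add: word_val_eq_digits_val digits_val_nonneg)

(* The sharper second bound is the invariant needed when a digit d is prepended. *)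
lemma word_val_less_metallic:
  assumes "admissible p xs"
  shows "word_val p xs < metallic p (length xs) \<and>
    (\<not> starts_cd p xs \<longrightarrow> word_val p xs + metallic_prev p (length xs) < metallic p (length xs))"
  using assms
proof (induction xs)
  case Nil
  then show ?case by (simp add: word_val_def metallic_prev_def)
next
  case (Cons a xs)
  let ?m = "metallic p (length xs)" and ?q = "metallic_prev p (length xs)"
  have val: "word_val p (a # xs) = int a * ?m + word_val p xs"
    by (rule word_val_Cons)
  have len: "metallic p (length (a # xs)) = (int p - 2) * ?m - ?q"
    "metallic_prev p (length (a # xs)) = ?m"
    by (simp_all add: metallic_Suc metallic_prev_def)
  have adm: "admissible p xs" using Cons.prems(1) by (rule admissible_ConsD)
  have IH1: "word_val p xs < ?m" and IH2: "\<not> starts_cd p xs \<Longrightarrow> word_val p xs + ?q < ?m"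
    using Cons.IH adm by auto
  have q: "?q < ?m" by (rule metallic_prev_less)
  have "a \<le> p - 3" using Cons.prems(1) by (auto simp: admissible_def)
  then consider "a \<le> p - 5" | "a = p - 4" | "a = p - 3" by linarith
  then have "word_val p (a # xs) + metallic_prev p (length (a # xs)) < metallic p (length (a # xs))
      \<or> (starts_cd p (a # xs) \<and> word_val p (a # xs) < metallic p (length (a # xs)))"
  proof cases
    case 1
    have "int a * ?m \<le> (int p - 5) * ?m"
      using 1 p5 metallic_pos[of "length xs"] by (intro mult_right_mono) auto
    then show ?thesis using val len IH1 q by (simp add: algebra_simps)
  next
    case 2
    then have "int a * ?m = (int p - 4) * ?m" using p5 by simp
    then show ?thesis using val len IH1 IH2 q starts_cd_Cons_c[of p xs] 2
      by (simp add: algebra_simps) linarith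
  next
    case 3
    then have "int a * ?m = (int p - 3) * ?m" using p5 by simp
    moreover have "starts_cd p (a # xs)"
      using 3 unfolding starts_cd_def by (metis append_Nil replicate_0)
    moreover have "\<not> starts_cd p xs"
      using 3 Cons.prems(1) dcd_free_Cons_d by (simp add: admissible_def)
    ultimately show ?thesis using val len IH2 by (simp add: algebra_simps)
  qed
  then show ?case
    using len metallic_pos[of "length xs"] by auto
qed

lemma word_val_Cons_div_mod:
  assumes "admissible p (a # xs)"
  shows "word_val p (a # xs) div metallic p (length xs) = int a"
    and "word_val p (a # xs) mod metallic p (length xs) = word_val p xs"
proof -
  have "0 \<le> word_val p xs" "word_val p xs < metallic p (length xs)"
    using word_val_nonneg word_val_less_metallic[OF admissible_ConsD[OF assms]] by auto
  then show "word_val p (a # xs) div metallic p (length xs) = int a"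
    and "word_val p (a # xs) mod metallic p (length xs) = word_val p xs"
    by (simp_all add: word_val_Cons)
qed

lemma admissible_word_val_inj:
  "admissible p xs \<Longrightarrow> admissible p ys \<Longrightarrow> length xs = length ys \<Longrightarrow> word_val p xs = word_val p ys
   \<Longrightarrow> xs = ys"
proof (induction xs arbitrary: ys)
  case (Cons a xs)
  then obtain b ys' where ys: "ys = b # ys'" by (cases ys) auto
  then have "int a = int b" "word_val p xs = word_val p ys'"
    using Cons.prems word_val_Cons_div_mod[of a xs] word_val_Cons_div_mod[of b ys'] by auto
  then show ?case
    using Cons ys admissible_ConsD by auto
qed simp

lemma metallic_le_word_val:
  assumes "b \<noteq> 0"
  shows "metallic p (length xs) \<le> word_val p (b # xs)"
proof -
  have "metallic p (length xs) \<le> int b * metallic p (length xs)"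
    using assms metallic_pos[of "length xs"] by simp
  then show ?thesis
    using word_val_nonneg[of xs] by (simp add: word_val_Cons)
qed

lemma metallic_code_length_le:
  assumes "is_metallic_code p n xs" and "is_metallic_code p n ys"
  shows "length xs \<le> length ys"
proof (rule ccontr)
  assume "\<not> length xs \<le> length ys"
  then obtain b xs' where xs: "xs = b # xs'" and len: "length ys \<le> length xs'"
    by (cases xs) auto
  from len have "metallic p (length ys) \<le> metallic p (length xs')"
    by (rule metallic_mono)
  also have "\<dots> \<le> word_val p xs"
    using assms(1) xs metallic_le_word_val[of b xs'] by (simp add: is_metallic_code_iff)
  also have "\<dots> = word_val p ys"
    using assms by (simp add: is_metallic_code_iff)
  moreover have "word_val p ys < metallic p (length ys)"
    using word_val_less_metallic[of ys] assms(2) by (simp add: is_metallic_code_iff)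
  ultimately show False
    by simp
qed

lemma metallic_code_eqI: "is_metallic_code p n xs \<Longrightarrow> metallic_code p n = xs"
  unfolding metallic_code_def
proof (rule the_equality)
  fix ys assume "is_metallic_code p n xs" "is_metallic_code p n ys"
  then show "ys = xs"
    using metallic_code_length_le[of n xs ys] metallic_code_length_le[of n ys xs]
      admissible_word_val_inj[of ys xs] by (auto simp: is_metallic_code_iff)
qed

lemma is_metallic_code_1: "is_metallic_code p 1 [1]"
  using is_metallic_code_snoc[OF is_metallic_code_Nil[of p], of 1 1] p5 by (simp add: word_val_def)

section \<open>The code of the predecessor\<close>

(* For s = 0 the word d c^j has value m_(j+1) - 1: this is the borrow in predecessor_zero_last. *)
lemma digits_val_replicate_c_d:
  "digits_val p s (replicate j (p-4) @ (p-3) # ds) =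
     metallic p (s + j + 1) - metallic p s + metallic_prev p s + digits_val p (s + j + 1) ds"
proof (induction j arbitrary: s)
  case 0
  have "int (p-3) = int p - 3" using p5 by simp
  then show ?case using metallic_Suc[of p s] by (simp add: algebra_simps)
next
  case (Suc j)
  have "int (p-4) = int p - 4" using p5 by simp
  then show ?case
    using Suc.IH[of "Suc s"] metallic_Suc[of p s] by (simp add: algebra_simps metallic_prev_def)
qed

lemma predecessor_nonzero_last:
  assumes adm: "admissible p (xs @ [a])" and "a \<noteq> 0"
  shows "admissible p (xs @ [a - 1])" and "\<not> ends_dc p (xs @ [a - 1])"
    and "word_val p (xs @ [a - 1]) = word_val p (xs @ [a]) - 1"
    and "word_val p (xs @ [a, 0]) - word_val p (xs @ [a - 1, 0]) = int p - 2"
proof -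
  have free: "dcd_free p xs" "a = p-3 \<longrightarrow> \<not> ends_dc p xs"
    using adm by (simp_all add: admissible_def dcd_free_snoc)
  have "a \<le> p - 3"
    using adm by (simp add: admissible_def)
  then have "a - 1 \<noteq> p - 3" and "a - 1 = p - 4 \<longleftrightarrow> a = p - 3"
    using \<open>a \<noteq> 0\<close> p5 by auto
  then show "admissible p (xs @ [a - 1])" and "\<not> ends_dc p (xs @ [a - 1])"
    using adm free unfolding admissible_def dcd_free_snoc ends_dc_snoc by auto
  have a: "int (a - Suc 0) = int a - 1"
    using \<open>a \<noteq> 0\<close> by simp
  show "word_val p (xs @ [a - 1]) = word_val p (xs @ [a]) - 1"
    using word_val_snoc[of p xs a] word_val_snoc[of p xs "a - 1"] a by simp
  show "word_val p (xs @ [a, 0]) - word_val p (xs @ [a - 1, 0]) = int p - 2"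
    by (simp add: word_val_eq_digits_val a algebra_simps)
qed

lemma predecessor_zero_last:
  assumes adm: "admissible p u" and u: "u = xs @ [b] @ replicate (Suc j) 0" and "b \<noteq> 0"
  defines "w \<equiv> xs @ [b - 1, p - 3] @ replicate j (p - 4)"
  shows "admissible p w"
    and "word_val p w = word_val p u - 1"
    and "word_val p (u @ [0]) - word_val p (w @ [0]) = int p - 3"
proof -
  have "dcd_free p ((xs @ [b]) @ replicate (Suc j) 0)"
    using adm u by (simp add: admissible_def)
  then have free: "dcd_free p xs" "b = p-3 \<longrightarrow> \<not> ends_dc p xs"
    using dcd_free_appendD1 dcd_free_snoc by blast+
  have "b \<le> p - 3"
    using adm u by (simp add: admissible_def)
  then have "b - 1 \<noteq> p - 3" and "b - 1 = p - 4 \<longleftrightarrow> b = p - 3"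
    using \<open>b \<noteq> 0\<close> p5 by auto
  then have "dcd_free p ((xs @ [b - 1]) @ [p - 3])"
    unfolding dcd_free_snoc[of p "xs @ [b - 1]"] using free by (simp add: dcd_free_snoc ends_dc_snoc)
  then have "dcd_free p w"
    using dcd_free_append_replicate_c[of p "xs @ [b - 1, p - 3]" j] p5 by (simp add: w_def)
  then show "admissible p w"
    using adm u by (auto simp: admissible_def w_def)
  have b: "int (b - Suc 0) = int b - 1"
    using \<open>b \<noteq> 0\<close> by simp
  have val_w: "digits_val p s (rev w) = int b * metallic p (s + j + 1) - metallic p s
      + metallic_prev p s + digits_val p (s + j + 2) (rev xs)" for s
    by (simp add: w_def digits_val_replicate_c_d b algebra_simps)
  have val_u: "digits_val p s (rev u) = int b * metallic p (s + j + 1) + digits_val p (s + j + 2) (rev xs)" for s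
    by (simp add: u digits_val_append)
  show "word_val p w = word_val p u - 1"
    using val_w[of 0] val_u[of 0] by (simp add: word_val_eq_digits_val metallic_prev_def)
  show "word_val p (u @ [0]) - word_val p (w @ [0]) = int p - 3"
    using val_w[of 1] val_u[of 1] by (simp add: word_val_eq_digits_val metallic_prev_def)
qed

lemma admissible_predecessor:
  assumes u: "is_metallic_code p n u" and "1 \<le> n"
  obtains v where "admissible p v" and "word_val p v = int (n - 1)"
    and "word_val p (u @ [0]) - word_val p (v @ [0]) = (if last u \<noteq> 0 then int p - 2 else int p - 3)"
    and "last u \<noteq> 0 \<Longrightarrow> \<not> ends_dc p v"
proof -
  have adm: "admissible p u" and hd: "u = [] \<or> hd u \<noteq> 0" and val: "word_val p u = int n"
    using u by (auto simp: is_metallic_code_iff)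
  have "u \<noteq> []"
    using val \<open>1 \<le> n\<close> by (auto simp: word_val_def)
  show ?thesis
  proof (cases "last u = 0")
    case False
    obtain xs a where xs: "u = xs @ [a]"
      using \<open>u \<noteq> []\<close> by (cases u rule: rev_cases) auto
    then show ?thesis
      using that[of "xs @ [a - 1]"] predecessor_nonzero_last[of xs a] adm val False \<open>1 \<le> n\<close>
      by (simp add: of_nat_diff)
  next
    case True
    have "\<exists>x\<in>set u. x \<noteq> 0"
      using hd \<open>u \<noteq> []\<close> by (cases u) auto
    then obtain xs b k where "b \<noteq> 0" and u_split: "u = xs @ [b] @ replicate k 0"
      using split_trailing_zeros by blast
    moreover obtain j where "k = Suc j"
      using True u_split \<open>b \<noteq> 0\<close> by (cases k) auto
    ultimately show ?thesis
      using that[of "xs @ [b - 1, p - 3] @ replicate j (p - 4)"] True val \<open>1 \<le> n\<close>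
        predecessor_zero_last[OF adm, of xs b j] by (simp add: of_nat_diff)
  qed
qed

lemma metallic_code_predecessor:
  assumes u: "is_metallic_code p n u" and w: "is_metallic_code p (n - 1) w" and "1 \<le> n"
  shows "word_val p (u @ [0]) - word_val p (w @ [0]) = (if last u \<noteq> 0 then int p - 2 else int p - 3)"
    and "last u \<noteq> 0 \<Longrightarrow> \<not> ends_dc p w"
proof -
  obtain v where v: "admissible p v" "word_val p v = int (n - 1)"
    and shift: "word_val p (u @ [0]) - word_val p (v @ [0]) = (if last u \<noteq> 0 then int p - 2 else int p - 3)"
    and ends: "last u \<noteq> 0 \<Longrightarrow> \<not> ends_dc p v"
    using admissible_predecessor[OF u \<open>1 \<le> n\<close>] by blast
  have "w = dropWhile (\<lambda>x. x = 0) v"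
    using metallic_code_eqI[OF w] metallic_code_eqI[OF is_metallic_code_dropWhile_0[OF v]] by simp
  then show "word_val p (u @ [0]) - word_val p (w @ [0]) = (if last u \<noteq> 0 then int p - 2 else int p - 3)"
    and "last u \<noteq> 0 \<Longrightarrow> \<not> ends_dc p w"
    using shift ends word_val_dropWhile_0_append[of p v "[0]"] ends_dc_dropWhileD by auto
qed

section \<open>The penultimate tree\<close>

lemma son_count_ge_2: "2 \<le> son_count p u"
  using p5 by (auto simp: son_count_def)

lemma length_son_words: "length (son_words p u w) = son_count p u"
  using son_count_ge_2[of u] by (simp add: son_words_def)

lemma nth_son_words:
  assumes "i < son_count p u"
  shows "son_words p u w ! i =
    (if i + 2 < son_count p u then w @ [i + 2] else if i + 2 = son_count p u then u @ [0] else u @ [1])"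
  using assms son_count_ge_2[of u]
  by (auto simp: son_words_def nth_append less_diff_conv numeral_2_eq_2 nth_Cons')

lemma map_last_son_words: "map last (son_words p u w) = [2..<son_count p u] @ [0, 1]"
proof -
  have "map (\<lambda>h. h + 1) [1..<son_count p u - 1] = [2..<son_count p u]"
    using son_count_ge_2[of u] map_Suc_upt[of 1 "son_count p u - 1"] by (simp add: numeral_2_eq_2)
  then show ?thesis
    by (simp add: son_words_def comp_def)
qed

lemma map_last_nonzero_son_words:
  "map (\<lambda>s. last s \<noteq> 0) (son_words p u w) = map (\<lambda>i. i \<noteq> son_count p u - 1) [1..<son_count p u + 1]"
  by (rule nth_equalityI) (auto simp: length_son_words nth_son_words nth_upt simp del: upt_Suc)

lemma son_words_codes:
  assumes u: "is_metallic_code p n u" and w: "is_metallic_code p (n - 1) w" and "1 \<le> n"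
  shows "word_val p (u @ [0]) = word_val p (w @ [0]) + int (son_count p u)"
    and "i < son_count p u \<Longrightarrow> int m = word_val p (w @ [0]) + 2 + int i
          \<Longrightarrow> is_metallic_code p m (son_words p u w ! i)"
proof -
  show shift: "word_val p (u @ [0]) = word_val p (w @ [0]) + int (son_count p u)"
    using metallic_code_predecessor(1)[OF u w \<open>1 \<le> n\<close>] p5
    by (simp add: son_count_def of_nat_diff split: if_splits)
  assume i: "i < son_count p u" and m: "int m = word_val p (w @ [0]) + 2 + int i"
  have "u \<noteq> []"
    using u \<open>1 \<le> n\<close> by (auto simp: is_metallic_code_iff word_val_def)
  consider "i + 2 < son_count p u" | "i + 2 = son_count p u" | "i + 1 = son_count p u"
    using i by linarith
  then show "is_metallic_code p m (son_words p u w ! i)"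
  proof cases
    case 1
    moreover have "i + 2 = p - 3 \<Longrightarrow> \<not> ends_dc p w"
      using 1 metallic_code_predecessor(2)[OF u w \<open>1 \<le> n\<close>] by (auto simp: son_count_def split: if_splits)
    ultimately show ?thesis
      using is_metallic_code_snoc[OF w, of "i + 2" m] i m p5
      by (simp add: nth_son_words son_count_def split: if_splits)
  next
    case 2
    then show ?thesis
      using is_metallic_code_snoc[OF u, of 0 m] \<open>u \<noteq> []\<close> shift m p5 by (simp add: nth_son_words)
  next
    case 3
    then show ?thesis
      using is_metallic_code_snoc[OF u, of 1 m] \<open>u \<noteq> []\<close> shift m p5 by (simp add: nth_son_words)
  qed
qed

lemma tree_size_0: "tree_size p 0 = 1"
  by (simp add: tree_size_def metallic_code_eqI[OF is_metallic_code_Nil] word_val_def)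

lemma int_tree_size: "int (tree_size p k) = word_val p (metallic_code p k @ [0]) + 1"
  using word_val_nonneg by (simp add: tree_size_def)

lemma metallic_codes_up_to_tree_size:
  "(\<forall>n \<le> tree_size p k. is_metallic_code p n (metallic_code p n)) \<and> k < tree_size p k"
proof (induction k)
  case 0
  have "is_metallic_code p n (metallic_code p n)" if "n \<le> 1" for n
    using that is_metallic_code_Nil[of p] is_metallic_code_1 metallic_code_eqI
    by (cases n) auto
  then show ?case
    by (simp add: tree_size_0)
next
  case (Suc k)
  let ?u = "metallic_code p (Suc k)" and ?w = "metallic_code p k"
  have codes: "is_metallic_code p n (metallic_code p n)" if "n \<le> tree_size p k" for n
    using Suc that by blast
  have u: "is_metallic_code p (Suc k) ?u" and w: "is_metallic_code p (Suc k - 1) ?w"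
    using Suc codes by auto
  note sons = son_words_codes[OF u w]
  have size: "tree_size p (Suc k) = tree_size p k + son_count p ?u"
    using sons(1) int_tree_size[of k] int_tree_size[of "Suc k"] by simp
  have "is_metallic_code p n (metallic_code p n)" if "n \<le> tree_size p (Suc k)" for n
  proof (cases "n \<le> tree_size p k")
    case False
    define i where "i = n - tree_size p k - 1"
    have "i < son_count p ?u" and "int n = word_val p (?w @ [0]) + 2 + int i"
      using False that size int_tree_size[of k] by (auto simp: i_def)
    then have "is_metallic_code p n (son_words p ?u ?w ! i)"
      using sons(2) by simp
    then show ?thesis
      using metallic_code_eqI by simp
  qed (rule codes)
  moreover have "Suc k < tree_size p (Suc k)"
    using size Suc son_count_ge_2[of ?u] by linarith
  ultimately show ?case
    by blast
qed

lemma is_metallic_code_metallic_code: "is_metallic_code p n (metallic_code p n)"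
  using metallic_codes_up_to_tree_size[of n] by auto

lemma less_tree_size: "k < tree_size p k"
  using metallic_codes_up_to_tree_size[of k] by blast

lemma tree_size_step: "1 \<le> \<nu> \<Longrightarrow> tree_size p \<nu> = tree_size p (\<nu> - 1) + son_count p (metallic_code p \<nu>)"
  using son_words_codes(1)[OF is_metallic_code_metallic_code is_metallic_code_metallic_code]
    int_tree_size[of \<nu>] int_tree_size[of "\<nu> - 1"] by simp

lemma map_metallic_code_sons:
  assumes "1 \<le> \<nu>"
  shows "map (metallic_code p) [tree_size p (\<nu> - 1) + 1..<tree_size p \<nu> + 1]
    = son_words p (metallic_code p \<nu>) (metallic_code p (\<nu> - 1))"
proof (rule nth_equalityI)
  show "length (map (metallic_code p) [tree_size p (\<nu> - 1) + 1..<tree_size p \<nu> + 1])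
      = length (son_words p (metallic_code p \<nu>) (metallic_code p (\<nu> - 1)))"
    using tree_size_step[OF assms] by (simp add: length_son_words)
next
  fix i
  assume "i < length (map (metallic_code p) [tree_size p (\<nu> - 1) + 1..<tree_size p \<nu> + 1])"
  then have i: "i < son_count p (metallic_code p \<nu>)"
    using tree_size_step[OF assms] by (simp del: upt_Suc)
  have "is_metallic_code p (tree_size p (\<nu> - 1) + 1 + i) (son_words p (metallic_code p \<nu>) (metallic_code p (\<nu> - 1)) ! i)"
    using son_words_codes(2)[OF is_metallic_code_metallic_code is_metallic_code_metallic_code assms i]
      int_tree_size[of "\<nu> - 1"] by simp
  then show "map (metallic_code p) [tree_size p (\<nu> - 1) + 1..<tree_size p \<nu> + 1] ! i
      = son_words p (metallic_code p \<nu>) (metallic_code p (\<nu> - 1)) ! i"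
    using i tree_size_step[OF assms] metallic_code_eqI by (simp add: nth_upt del: upt_Suc)
qed

lemma tree_colors_penultimate:
  "tree_colors p (penultimate p) k = map (\<lambda>i. signature p i \<noteq> 0) [1..<tree_size p k + 1]"
proof (induction k)
  case 0
  have "signature p 1 \<noteq> 0"
    using metallic_code_eqI[OF is_metallic_code_1] by (simp add: signature_def)
  then show ?case
    by (simp add: tree_size_0)
next
  case (Suc k)
  let ?ns = "son_count p (metallic_code p (Suc k))"
  have colour: "tree_colors p (penultimate p) k ! k = (signature p (Suc k) \<noteq> 0)"
    using Suc.IH less_tree_size[of k] by (simp add: nth_upt del: upt_Suc)
  have ns: "(if signature p (Suc k) \<noteq> 0 then p - 2 else p - 3) = ?ns"
    and pos: "penultimate p (Suc k) (signature p (Suc k) \<noteq> 0) = ?ns - 1"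
    by (simp_all add: son_count_def signature_def penultimate_def)
  have "tree_colors p (penultimate p) (Suc k)
      = tree_colors p (penultimate p) k @ map (\<lambda>i. i \<noteq> ?ns - 1) [1..<?ns + 1]"
    by (simp only: tree_colors.simps Let_def colour ns pos)
  also have "map (\<lambda>i. i \<noteq> ?ns - 1) [1..<?ns + 1]
      = map (\<lambda>s. last s \<noteq> 0) (map (metallic_code p) [tree_size p k + 1..<tree_size p (Suc k) + 1])"
    using map_metallic_code_sons[of "Suc k"] map_last_nonzero_son_words by simp
  also have "\<dots> = map (\<lambda>i. signature p i \<noteq> 0) [tree_size p k + 1..<tree_size p (Suc k) + 1]"
    by (simp add: signature_def)
  also have "tree_colors p (penultimate p) k @ \<dots> = map (\<lambda>i. signature p i \<noteq> 0) [1..<tree_size p (Suc k) + 1]"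
    using Suc.IH tree_size_step[of "Suc k"] upt_add_eq_append[of 1 "tree_size p k + 1" ?ns]
    by (simp add: ac_simps del: upt_Suc)
  finally show ?case .
qed

lemma is_white_penultimate_iff:
  assumes "1 \<le> \<nu>"
  shows "is_white p (penultimate p) \<nu> \<longleftrightarrow> signature p \<nu> \<noteq> 0"
proof -
  have "[1..<tree_size p \<nu> + 1] ! (\<nu> - 1) = \<nu>"
    using assms less_tree_size[of \<nu>] nth_upt[of 1 "\<nu> - 1" "tree_size p \<nu> + 1"] by simp
  then show ?thesis
    using assms less_tree_size[of \<nu>] by (simp add: is_white_def tree_colors_penultimate del: upt_Suc)
qed

lemma sons_penultimate: "sons p (penultimate p) \<nu> = [tree_size p (\<nu> - 1) + 1..<tree_size p \<nu> + 1]"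
  by (simp add: sons_def tree_colors_penultimate del: upt_Suc)

lemma map_metallic_code_sons_penultimate:
  "1 \<le> \<nu> \<Longrightarrow> map (metallic_code p) (sons p (penultimate p) \<nu>)
    = son_words p (metallic_code p \<nu>) (metallic_code p (\<nu> - 1))"
  using map_metallic_code_sons by (simp add: sons_penultimate del: upt_Suc)

lemma map_signature_sons_penultimate:
  assumes "1 \<le> \<nu>"
  shows "map (signature p) (sons p (penultimate p) \<nu>) = [2..<length (sons p (penultimate p) \<nu>)] @ [0, 1]"
proof -
  have "map (signature p) (sons p (penultimate p) \<nu>)
      = map last (map (metallic_code p) (sons p (penultimate p) \<nu>))"
    by (simp add: signature_def)
  then show ?thesis
    using map_metallic_code_sons_penultimate[OF assms] map_last_son_words length_son_words
    by (metis length_map)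
qed

lemma black_son_penultimate_iff:
  assumes "1 \<le> \<nu>" and s: "s \<in> set (sons p (penultimate p) \<nu>)"
  shows "\<not> is_white p (penultimate p) s \<longleftrightarrow> metallic_code p s = metallic_code p \<nu> @ [0]"
proof -
  have "1 \<le> s"
    using s by (simp add: sons_penultimate del: upt_Suc)
  moreover have "metallic_code p s \<in> set (son_words p (metallic_code p \<nu>) (metallic_code p (\<nu> - 1)))"
    using s map_metallic_code_sons_penultimate[OF assms(1)] by (metis image_eqI list.set_map)
  ultimately show ?thesis
    using last_son_words_eq_0_iff is_white_penultimate_iff by (simp add: signature_def)
qed

end

theorem lemma5:
  fixes p \<nu> :: nat
  assumes "p \<ge> 5" and "\<nu> \<ge> 1"
  defines "u \<equiv> metallic_code p \<nu>" and "w \<equiv> metallic_code p (\<nu> - 1)"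
      and "S \<equiv> sons p (penultimate p) \<nu>"
  shows "(\<not> is_white p (penultimate p) \<nu> \<longrightarrow>
            signature p \<nu> = 0 \<and>
            map (metallic_code p) S = map (\<lambda>h. w @ [h + 1]) [1..<p-4] @ [u @ [0], u @ [1]])
       \<and> (is_white p (penultimate p) \<nu> \<longrightarrow>
            signature p \<nu> \<noteq> 0 \<and>
            map (metallic_code p) S = map (\<lambda>h. w @ [h + 1]) [1..<p-3] @ [u @ [0], u @ [1]])
       \<and> (\<forall>s\<in>set S. \<not> is_white p (penultimate p) s \<longleftrightarrow> metallic_code p s = u @ [0])
       \<and> map (signature p) S = [2..<length S] @ [0, 1]"
proof -
  have codes: "map (metallic_code p) S = son_words p u w"
    using map_metallic_code_sons_penultimate[OF assms(1,2)] by (simp add: S_def u_def w_def)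
  have "is_white p (penultimate p) \<nu> \<longleftrightarrow> last u \<noteq> 0"
    using is_white_penultimate_iff[OF assms(1,2)] by (simp add: signature_def u_def)
  moreover have "p - 3 - 1 = p - 4" and "p - 2 - 1 = p - 3"
    by simp_all
  ultimately show ?thesis
    using codes map_signature_sons_penultimate[OF assms(1,2)] black_son_penultimate_iff[OF assms(1,2)]
    by (simp add: S_def u_def signature_def son_words_def son_count_def)
qed

end
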